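(* Let $m,n\in\mathbb N$ with $m\ge 5$, $n\ge 4$ and $m-1\mid (n-3)$, and let $i\in\{1,2\}$. Then $r(T_m^i,T_n')=m+n-3$.
   Context: All graphs are finite and simple; a graph "contains" $H$ if it has a subgraph isomorphic to $H$. For graphs $G_1,G_2$, the Ramsey number $r(G_1,G_2)$ is the smallest positive integer $N$ such that for every graph $G$ on $N$ vertices, either $G$ contains a copy of $G_1$ or the complement $\overline G$ contains a copy of $G_2$. For $m\ge 5$, $T_m^1$ is the tree with vertex set $\{v_0,\ldots,v_{m-1}\}$ and edges $v_0v_1,\ldots,v_0v_{m-3},v_{m-4}v_{m-2},v_{m-3}v_{m-1}$, and $T_m^2$ is the tree on the same vertex set with edges $v_0v_1,\ldots,v_0v_{m-3},v_{m-3}v_{m-2},v_{m-3}v_{m-1}$. For $n\ge 4$, $T_n'$ is the unique (up to isomorphism) tree on $n$ vertices with maximum degree $n-2$. *)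

theory Defs
  imports Main
begin

(* A finite simple graph on vertex set {..<N} (vertices 0..N-1) is a symmetric,
   irreflexive relation E :: nat => nat => bool (only pairs inside {..<N} matter). *)
definition simple_graph :: "nat \<Rightarrow> (nat \<Rightarrow> nat \<Rightarrow> bool) \<Rightarrow> bool" where
  "simple_graph N E \<longleftrightarrow> (\<forall>x y. E x y \<longrightarrow> E y x) \<and> (\<forall>x. \<not> E x x)"

definition compl_graph :: "(nat \<Rightarrow> nat \<Rightarrow> bool) \<Rightarrow> nat \<Rightarrow> nat \<Rightarrow> bool" where
  "compl_graph E x y \<longleftrightarrow> x \<noteq> y \<and> \<not> E x y"

definition contains :: "nat \<Rightarrow> (nat \<Rightarrow> nat \<Rightarrow> bool) \<Rightarrow> nat \<Rightarrow> (nat \<Rightarrow> nat \<Rightarrow> bool) \<Rightarrow> bool" where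
  "contains N E k F \<longleftrightarrow> (\<exists>f. inj_on f {..<k} \<and> f ` {..<k} \<subseteq> {..<N} \<and>
      (\<forall>a<k. \<forall>b<k. F a b \<longrightarrow> E (f a) (f b)))"

definition ramsey_prop :: "nat \<Rightarrow> (nat \<Rightarrow> nat \<Rightarrow> bool) \<Rightarrow> nat \<Rightarrow> (nat \<Rightarrow> nat \<Rightarrow> bool) \<Rightarrow> nat \<Rightarrow> bool" where
  "ramsey_prop k1 F1 k2 F2 N \<longleftrightarrow>
     (\<forall>E. simple_graph N E \<longrightarrow> contains N E k1 F1 \<or> contains N (compl_graph E) k2 F2)"

definition ramsey_number :: "nat \<Rightarrow> (nat \<Rightarrow> nat \<Rightarrow> bool) \<Rightarrow> nat \<Rightarrow> (nat \<Rightarrow> nat \<Rightarrow> bool) \<Rightarrow> nat" where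
  "ramsey_number k1 F1 k2 F2 = (LEAST N. 0 < N \<and> ramsey_prop k1 F1 k2 F2 N)"

definition edges_rel :: "(nat \<times> nat) set \<Rightarrow> nat \<Rightarrow> nat \<Rightarrow> bool" where
  "edges_rel S a b \<longleftrightarrow> (a, b) \<in> S \<or> (b, a) \<in> S"

definition T1 :: "nat \<Rightarrow> nat \<Rightarrow> nat \<Rightarrow> bool" where
  "T1 m = edges_rel ({(0, j) | j. 1 \<le> j \<and> j \<le> m - 3} \<union> {(m - 4, m - 2), (m - 3, m - 1)})"

definition T2 :: "nat \<Rightarrow> nat \<Rightarrow> nat \<Rightarrow> bool" where
  "T2 m = edges_rel ({(0, j) | j. 1 \<le> j \<and> j \<le> m - 3} \<union> {(m - 3, m - 2), (m - 3, m - 1)})"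

(* T_n': tree on n vertices with maximum degree n-2 (unique up to isomorphism);
   representative: v0v1..v0v_{n-2}, v_{n-2}v_{n-1} *)
definition Tprime :: "nat \<Rightarrow> nat \<Rightarrow> nat \<Rightarrow> bool" where
  "Tprime n = edges_rel ({(0, j) | j. 1 \<le> j \<and> j \<le> n - 2} \<union> {(n - 2, n - 1)})"

definition Tmi :: "nat \<Rightarrow> nat \<Rightarrow> nat \<Rightarrow> nat \<Rightarrow> bool" where
  "Tmi i m = (if i = 1 then T1 m else T2 m)"

end

theory Submission
  imports Defs
begin

(* Lower bound: on m + n - 4 = (m - 1)(k + 1) vertices (n - 3 = (m - 1) k) take the disjoint union
   of cliques of size m - 1 ("block graph").  It contains no connected graph on m vertices, and in
   its complement the centre of a copy of T_n' would need n - 2 neighbours outside its own block,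
   where only n - 3 vertices are available.

   Upper bound (lemma upper_bound), for a graph G on N = m + n - 3 vertices:
   (A) some vertex v has at least n - 1 non-neighbours.  Either one of them has a non-neighbour
       other than v, and T_n' lies in the complement, or three of them are adjacent to all
       vertices but v, which easily carries both trees.
   (B) otherwise G has minimum degree at least m - 2.  An induced path x - y - w yields both
       trees greedily.  Without one, G is a cluster graph; as (m - 1) does not divide N, some
       clique has at least m vertices.

   All embeddings come from one principle (contains_core_with_leaves): a tree made of a small
   core plus leaves at one core vertex embeds once the core embeds and the image of that vertex
   has enough further neighbours. *)

lemma two_elements: "2 \<le> card A \<Longrightarrow> \<exists>a\<in>A. \<exists>b\<in>A. a \<noteq> b"
  by (metis card.infinite card_le_Suc0_iff_eq not_less_eq_eq numeral_2_eq_2 zero_le)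

lemma three_elements: "3 \<le> card A \<Longrightarrow> \<exists>a\<in>A. \<exists>b\<in>A. \<exists>c\<in>A. distinct [a, b, c]"
proof -
  assume "3 \<le> card A"
  then obtain B where "B \<subseteq> A" "card B = 3" using obtain_subset_with_card_n by metis
  then show ?thesis by (auto simp: card_3_iff)
qed

lemma element_of_card: "k < card A \<Longrightarrow> \<exists>a. a \<in> A"
  by (metis card.empty ex_in_conv not_less0)

lemma card_Diff_list: "card A - length xs \<le> card (A - set xs)"
  using diff_card_le_card_Diff[of "set xs" A] card_length[of xs] by simp

lemma contains_core_with_leaves:
  fixes E F :: "nat \<Rightarrow> nat \<Rightarrow> bool" and \<phi> :: "nat \<Rightarrow> nat"
  assumes split: "R \<union> L = {..<k}" "R \<inter> L = {}"
    and core_inj: "inj_on \<phi> R" "\<phi> ` R \<subseteq> {..<N}"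
    and core_edges: "\<forall>a\<in>R. \<forall>b\<in>R. F a b \<longrightarrow> E (\<phi> a) (\<phi> b)"
    and centre: "c \<in> R" and leaves: "\<forall>a\<in>L. \<forall>b. F a b \<or> F b a \<longrightarrow> b = c"
    and S: "finite S" "S \<subseteq> {..<N}" "card L \<le> card S" "S \<inter> \<phi> ` R = {}"
    and star: "\<forall>s\<in>S. E (\<phi> c) s" and sym: "\<forall>x y. E x y \<longrightarrow> E y x"
  shows "contains N E k F"
proof -
  have "finite L" using split(1) by (metis finite_Un finite_lessThan)
  then obtain g where g: "g ` L \<subseteq> S" "inj_on g L"
    using card_le_inj[OF _ S(1) S(3)] by blast
  define f where "f a = (if a \<in> R then \<phi> a else g a)" for a
  have "inj_on f (R \<union> L)"
  proof (rule inj_onI)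
    fix a b assume ab: "a \<in> R \<union> L" "b \<in> R \<union> L" "f a = f b"
    have core: "f x \<in> \<phi> ` R" if "x \<in> R" for x using that by (simp add: f_def)
    have leaf: "f x \<in> S" "x \<notin> R" if "x \<in> L" for x
      using that split(2) g(1) by (auto simp: f_def)
    from ab(1,2) consider "a \<in> R" "b \<in> R" | "a \<in> L" "b \<in> L"
      | "a \<in> R" "b \<in> L" | "a \<in> L" "b \<in> R" by blast
    then show "a = b"
    proof cases
      case 1
      then show ?thesis using ab(3) inj_onD[OF core_inj(1)] by (simp add: f_def)
    next
      case 2
      then show ?thesis using ab(3) inj_onD[OF g(2)] leaf(2) by (simp add: f_def)
    qed (use ab(3) core leaf(1) S(4) in \<open>metis disjoint_iff\<close>)+
  qed
  moreover have "f ` (R \<union> L) \<subseteq> {..<N}"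
    unfolding f_def using core_inj(2) g(1) S(2) by auto
  moreover have "E (f a) (f b)" if "a < k" "b < k" "F a b" for a b
  proof (cases "a \<in> L \<or> b \<in> L")
    case True
    then have "(a \<in> L \<and> b = c) \<or> (b \<in> L \<and> a = c)" using leaves that(3) by blast
    moreover have "x \<in> L \<Longrightarrow> E (\<phi> c) (f x)" for x using split(2) g(1) star by (auto simp: f_def)
    moreover have "f c = \<phi> c" using centre by (simp add: f_def)
    ultimately show ?thesis using sym by metis
  next
    case False
    then have "a \<in> R" "b \<in> R" using that(1,2) split(1) by auto
    then show ?thesis unfolding f_def using core_edges that(3) by simp
  qed
  ultimately show ?thesis unfolding contains_def split(1) by blast
qed

lemma T1_edge: "T1 m a b \<longleftrightarrow> (a = 0 \<and> 1 \<le> b \<and> b \<le> m - 3) \<or> (b = 0 \<and> 1 \<le> a \<and> a \<le> m - 3)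
    \<or> (a, b) \<in> {(m - 4, m - 2), (m - 2, m - 4), (m - 3, m - 1), (m - 1, m - 3)}"
  unfolding T1_def edges_rel_def by auto

lemma T2_edge: "T2 m a b \<longleftrightarrow> (a = 0 \<and> 1 \<le> b \<and> b \<le> m - 3) \<or> (b = 0 \<and> 1 \<le> a \<and> a \<le> m - 3)
    \<or> (a, b) \<in> {(m - 3, m - 2), (m - 2, m - 3), (m - 3, m - 1), (m - 1, m - 3)}"
  unfolding T2_def edges_rel_def by auto

lemma Tprime_edge: "Tprime n a b \<longleftrightarrow> (a = 0 \<and> 1 \<le> b \<and> b \<le> n - 2) \<or> (b = 0 \<and> 1 \<le> a \<and> a \<le> n - 2)
    \<or> (a, b) \<in> {(n - 2, n - 1), (n - 1, n - 2)}"
  unfolding Tprime_def edges_rel_def by auto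

lemma contains_T1:
  fixes E :: "nat \<Rightarrow> nat \<Rightarrow> bool"
  assumes m: "m \<ge> 5" and sym: "\<forall>x y. E x y \<longrightarrow> E y x"
    and c: "distinct [c0, c1, c2, c3, c4]" "{c0, c1, c2, c3, c4} \<subseteq> {..<N}"
    and S: "finite S" "S \<subseteq> {..<N}" "m - 5 \<le> card S" "S \<inter> {c0, c1, c2, c3, c4} = {}"
    and e: "E c0 c1" "E c0 c2" "E c1 c3" "E c2 c4" "\<forall>s\<in>S. E c0 s"
  shows "contains N E m (T1 m)"
proof -
  define k where "k = m - 5"
  have k: "m = k + 5" using m by (simp add: k_def)
  define R where "R = {0, k+1, k+2, k+3, k+4}"
  define \<phi> where "\<phi> a = (if a = 0 then c0 else if a = k+1 then c1 else if a = k+2 then c2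
      else if a = k+3 then c3 else c4)" for a
  have \<phi>R: "\<phi> ` R = {c0, c1, c2, c3, c4}" unfolding \<phi>_def R_def by auto
  have e': "E c1 c0" "E c2 c0" "E c3 c1" "E c4 c2" using sym e by blast+
  show ?thesis
  proof (rule contains_core_with_leaves[OF _ _ _ _ _ _ _ S(1,2) _ _ _ sym])
    show "R \<union> {1..k} = {..<m}" "R \<inter> {1..k} = {}" "0 \<in> R" unfolding R_def k by auto
    show "inj_on \<phi> R" unfolding inj_on_def \<phi>_def R_def using c(1) by auto
    show "\<phi> ` R \<subseteq> {..<N}" "S \<inter> \<phi> ` R = {}" using \<phi>R c(2) S(4) by simp_all
    show "\<forall>a\<in>R. \<forall>b\<in>R. T1 m a b \<longrightarrow> E (\<phi> a) (\<phi> b)"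
      using e(1-4) e' unfolding R_def
      by (intro ballI impI, elim insertE emptyE) (simp_all add: T1_edge k \<phi>_def)
    show "\<forall>a\<in>{1..k}. \<forall>b. T1 m a b \<or> T1 m b a \<longrightarrow> b = 0" unfolding T1_edge k by auto
    show "card {1..k} \<le> card S" using S(3) k by simp
    show "\<forall>s\<in>S. E (\<phi> 0) s" using e(5) by (simp add: \<phi>_def)
  qed
qed

lemma contains_T2:
  fixes E :: "nat \<Rightarrow> nat \<Rightarrow> bool"
  assumes m: "m \<ge> 5" and sym: "\<forall>x y. E x y \<longrightarrow> E y x"
    and c: "distinct [c0, c1, c2, c3, c4]" "{c0, c1, c2, c3, c4} \<subseteq> {..<N}"
    and S: "finite S" "S \<subseteq> {..<N}" "m - 5 \<le> card S" "S \<inter> {c0, c1, c2, c3, c4} = {}"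
    and e: "E c0 c1" "E c0 c2" "E c2 c3" "E c2 c4" "\<forall>s\<in>S. E c0 s"
  shows "contains N E m (T2 m)"
proof -
  define k where "k = m - 5"
  have k: "m = k + 5" using m by (simp add: k_def)
  define R where "R = {0, k+1, k+2, k+3, k+4}"
  define \<phi> where "\<phi> a = (if a = 0 then c0 else if a = k+1 then c1 else if a = k+2 then c2
      else if a = k+3 then c3 else c4)" for a
  have \<phi>R: "\<phi> ` R = {c0, c1, c2, c3, c4}" unfolding \<phi>_def R_def by auto
  have e': "E c1 c0" "E c2 c0" "E c3 c2" "E c4 c2" using sym e by blast+
  show ?thesis
  proof (rule contains_core_with_leaves[OF _ _ _ _ _ _ _ S(1,2) _ _ _ sym])
    show "R \<union> {1..k} = {..<m}" "R \<inter> {1..k} = {}" "0 \<in> R" unfolding R_def k by auto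
    show "inj_on \<phi> R" unfolding inj_on_def \<phi>_def R_def using c(1) by auto
    show "\<phi> ` R \<subseteq> {..<N}" "S \<inter> \<phi> ` R = {}" using \<phi>R c(2) S(4) by simp_all
    show "\<forall>a\<in>R. \<forall>b\<in>R. T2 m a b \<longrightarrow> E (\<phi> a) (\<phi> b)"
      using e(1-4) e' unfolding R_def
      by (intro ballI impI, elim insertE emptyE) (simp_all add: T2_edge k \<phi>_def)
    show "\<forall>a\<in>{1..k}. \<forall>b. T2 m a b \<or> T2 m b a \<longrightarrow> b = 0" unfolding T2_edge k by auto
    show "card {1..k} \<le> card S" using S(3) k by simp
    show "\<forall>s\<in>S. E (\<phi> 0) s" using e(5) by (simp add: \<phi>_def)
  qed
qed

lemma contains_Tprime:
  fixes E :: "nat \<Rightarrow> nat \<Rightarrow> bool"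
  assumes n: "n \<ge> 3" and sym: "\<forall>x y. E x y \<longrightarrow> E y x"
    and c: "distinct [c0, c1, c2]" "{c0, c1, c2} \<subseteq> {..<N}"
    and S: "finite S" "S \<subseteq> {..<N}" "n - 3 \<le> card S" "S \<inter> {c0, c1, c2} = {}"
    and e: "E c0 c1" "E c1 c2" "\<forall>s\<in>S. E c0 s"
  shows "contains N E n (Tprime n)"
proof -
  define k where "k = n - 3"
  have k: "n = k + 3" using n by (simp add: k_def)
  define R where "R = {0, k+1, k+2}"
  define \<phi> where "\<phi> a = (if a = 0 then c0 else if a = k+1 then c1 else c2)" for a
  have \<phi>R: "\<phi> ` R = {c0, c1, c2}" unfolding \<phi>_def R_def by auto
  have e': "E c1 c0" "E c2 c1" using sym e by blast+
  show ?thesis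
  proof (rule contains_core_with_leaves[OF _ _ _ _ _ _ _ S(1,2) _ _ _ sym])
    show "R \<union> {1..k} = {..<n}" "R \<inter> {1..k} = {}" "0 \<in> R" unfolding R_def k by auto
    show "inj_on \<phi> R" unfolding inj_on_def \<phi>_def R_def using c(1) by auto
    show "\<phi> ` R \<subseteq> {..<N}" "S \<inter> \<phi> ` R = {}" using \<phi>R c(2) S(4) by simp_all
    show "\<forall>a\<in>R. \<forall>b\<in>R. Tprime n a b \<longrightarrow> E (\<phi> a) (\<phi> b)"
      using e(1,2) e' unfolding R_def
      by (intro ballI impI, elim insertE emptyE) (simp_all add: Tprime_edge k \<phi>_def)
    show "\<forall>a\<in>{1..k}. \<forall>b. Tprime n a b \<or> Tprime n b a \<longrightarrow> b = 0" unfolding Tprime_edge k by auto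
    show "card {1..k} \<le> card S" using S(3) k by simp
    show "\<forall>s\<in>S. E (\<phi> 0) s" using e(3) by (simp add: \<phi>_def)
  qed
qed

definition nbhd :: "nat \<Rightarrow> (nat \<Rightarrow> nat \<Rightarrow> bool) \<Rightarrow> nat \<Rightarrow> nat set" where
  "nbhd N E v = {x. x < N \<and> E v x}"

lemma nbhd_finite [simp]: "finite (nbhd N E v)"
  and nbhd_subset: "nbhd N E v \<subseteq> {..<N}"
  unfolding nbhd_def by auto

lemma simple_graph_sym: "simple_graph N E \<Longrightarrow> \<forall>x y. E x y \<longrightarrow> E y x"
  unfolding simple_graph_def by blast

lemma simple_graph_irrefl: "simple_graph N E \<Longrightarrow> \<not> E x x"
  unfolding simple_graph_def by blast

lemma compl_graph_sym: "simple_graph N E \<Longrightarrow> \<forall>x y. compl_graph E x y \<longrightarrow> compl_graph E y x"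
  unfolding simple_graph_def compl_graph_def by blast

(* Every other vertex is either a neighbour or a non-neighbour of v. *)
lemma degree_sum:
  assumes g: "simple_graph N E" and v: "v < N"
  shows "card (nbhd N E v) + card (nbhd N (compl_graph E) v) = N - 1"
proof -
  have "nbhd N E v \<union> nbhd N (compl_graph E) v = {..<N} - {v}"
    using g unfolding nbhd_def compl_graph_def simple_graph_def by auto
  moreover have "nbhd N E v \<inter> nbhd N (compl_graph E) v = {}"
    unfolding nbhd_def compl_graph_def by auto
  ultimately have "card (nbhd N E v) + card (nbhd N (compl_graph E) v) = card ({..<N} - {v})"
    using card_Un_disjoint[OF nbhd_finite nbhd_finite] by metis
  then show ?thesis using v by simp
qed

(* Case (A), first alternative: v has n - 1 non-neighbours and one of them, u, has a further
   non-neighbour w; then v is the centre of T_n' in the complement, with the branch v-u-w. *)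
lemma Tprime_in_complement:
  assumes g: "simple_graph N E" and n: "n \<ge> 3" and v: "v < N"
    and big: "n - 1 \<le> card (nbhd N (compl_graph E) v)"
    and u: "u \<in> nbhd N (compl_graph E) v" and w: "w < N" "compl_graph E u w" "w \<noteq> v"
  shows "contains N (compl_graph E) n (Tprime n)"
proof (rule contains_Tprime[OF n compl_graph_sym[OF g]])
  let ?C = "nbhd N (compl_graph E) v"
  show "distinct [v, u, w]" "{v, u, w} \<subseteq> {..<N}"
    using u w v unfolding nbhd_def compl_graph_def by auto
  show "finite (?C - {u, w})" "?C - {u, w} \<subseteq> {..<N}" using nbhd_subset by auto
  show "n - 3 \<le> card (?C - {u, w})" using card_Diff_list[of ?C "[u, w]"] big by simp
  show "(?C - {u, w}) \<inter> {v, u, w} = {}" unfolding nbhd_def compl_graph_def by auto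
  show "compl_graph E v u" "compl_graph E u w" "\<forall>s\<in>?C - {u, w}. compl_graph E v s"
    using u w unfolding nbhd_def by auto
qed

(* Case (A), second alternative: three vertices adjacent to everything except v carry both trees.
   u1 is the centre; two further vertices c3, c4 hang below u2 and u3 (T_m^1) or both below u2
   (T_m^2), and the remaining vertices other than v serve as leaves. *)
lemma trees_of_dominating_triple:
  assumes g: "simple_graph N E" and m: "m \<ge> 5" and N: "m + 1 \<le> N"
    and u: "distinct [v, u1, u2, u3]" "{v, u1, u2, u3} \<subseteq> {..<N}"
    and dom: "\<forall>u\<in>{u1, u2, u3}. \<forall>x<N. x \<notin> {u, v} \<longrightarrow> E u x"
  shows "contains N E m (T1 m) \<and> contains N E m (T2 m)"
proof -
  define R where "R = {..<N} - {v, u1, u2, u3}"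
  have cardR: "N - 4 \<le> card R"
    unfolding R_def using card_Diff_list[of "{..<N}" "[v, u1, u2, u3]"] by simp
  then have "2 \<le> card R" using m N by linarith
  then obtain c3 c4 where c: "c3 \<in> R" "c4 \<in> R" "c3 \<noteq> c4" using two_elements by blast
  define S where "S = R - {c3, c4}"
  have S: "finite S" "S \<subseteq> {..<N}" "m - 5 \<le> card S"
    using card_Diff_list[of R "[c3, c4]"] cardR N unfolding S_def R_def by auto
  have S': "S \<inter> {u1, u2, u3, c3, c4} = {}" "S \<inter> {u1, u3, u2, c3, c4} = {}"
    unfolding S_def R_def by auto
  have cs: "distinct [u1, u2, u3, c3, c4]" "{u1, u2, u3, c3, c4} \<subseteq> {..<N}"
    "distinct [u1, u3, u2, c3, c4]" "{u1, u3, u2, c3, c4} \<subseteq> {..<N}"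
    using u c unfolding R_def by auto
  have "E u1 u2" "E u1 u3" "E u2 c3" "E u2 c4" "E u3 c4" "\<forall>s\<in>S. E u1 s"
    using dom u c unfolding S_def R_def by auto
  then show ?thesis
    using contains_T1[OF m simple_graph_sym[OF g] cs(1,2) S S'(1)]
      contains_T2[OF m simple_graph_sym[OF g] cs(3,4) S S'(2)] by blast
qed

(* Case (B) with an induced path x - y - w: T_m^2 with centre x, where y carries w and a second
   neighbour b of y. *)
lemma T2_of_induced_path:
  assumes g: "simple_graph N E" and m: "m \<ge> 5"
    and deg: "\<forall>v<N. m - 2 \<le> card (nbhd N E v)"
    and path: "{x, y, w} \<subseteq> {..<N}" "E x y" "E y w" "w \<noteq> x" "\<not> E x w"
  shows "contains N E m (T2 m)"
proof -
  have irr: "\<And>a. \<not> E a a" using simple_graph_irrefl[OF g] .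
  have dx: "m - 2 \<le> card (nbhd N E x)" and dy: "m - 2 \<le> card (nbhd N E y)"
    using deg path(1) by auto
  have "0 < card (nbhd N E y - {x, w})"
    using card_Diff_list[of "nbhd N E y" "[x, w]"] dy m by simp
  then obtain b where b: "b \<in> nbhd N E y - {x, w}" using element_of_card by blast
  have "0 < card (nbhd N E x - {y, b})"
    using card_Diff_list[of "nbhd N E x" "[y, b]"] dx m by simp
  then obtain c where c: "c \<in> nbhd N E x - {y, b}" using element_of_card by blast
  define S where "S = nbhd N E x - {y, b, c}"
  have S: "finite S" "S \<subseteq> {..<N}" "m - 5 \<le> card S"
    using card_Diff_list[of "nbhd N E x" "[y, b, c]"] dx nbhd_subset[of N E x]
    unfolding S_def by auto
  show ?thesis
  proof (rule contains_T2[OF m simple_graph_sym[OF g] _ _ S])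
    show "distinct [x, c, y, w, b]" "{x, c, y, w, b} \<subseteq> {..<N}"
      using b c path irr unfolding nbhd_def by auto
    show "S \<inter> {x, c, y, w, b} = {}" using path irr unfolding S_def nbhd_def by auto
    show "E x c" "E x y" "E y w" "E y b" "\<forall>s\<in>S. E x s"
      using b c path unfolding S_def nbhd_def by auto
  qed
qed

(* Case (B) with an induced path x - y - w: T_m^1 with centre x and branches x-y-w and x-z-b,
   unless no such z, b exist, which forces m = 5 and a path on five vertices. *)
lemma T1_of_induced_path:
  assumes g: "simple_graph N E" and m: "m \<ge> 5"
    and deg: "\<forall>v<N. m - 2 \<le> card (nbhd N E v)"
    and path: "{x, y, w} \<subseteq> {..<N}" "E x y" "E y w" "w \<noteq> x" "\<not> E x w"
  shows "contains N E m (T1 m)"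
proof -
  have irr: "\<And>a. \<not> E a a" using simple_graph_irrefl[OF g] .
  have dx: "m - 2 \<le> card (nbhd N E x)" using deg path(1) by auto
  show ?thesis
  proof (cases "\<exists>z\<in>nbhd N E x - {y}. \<exists>b. b \<in> nbhd N E z - {x, y, w}")
    case True
    then obtain z b where z: "z \<in> nbhd N E x - {y}" and b: "b \<in> nbhd N E z - {x, y, w}" by blast
    define S where "S = nbhd N E x - {y, z, b}"
    have S: "finite S" "S \<subseteq> {..<N}" "m - 5 \<le> card S"
      using card_Diff_list[of "nbhd N E x" "[y, z, b]"] dx nbhd_subset[of N E x]
      unfolding S_def by auto
    show ?thesis
    proof (rule contains_T1[OF m simple_graph_sym[OF g] _ _ S])
      show "distinct [x, y, z, w, b]" "{x, y, z, w, b} \<subseteq> {..<N}"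
        using z b path irr unfolding nbhd_def by auto
      show "S \<inter> {x, y, z, w, b} = {}" using path irr unfolding S_def nbhd_def by auto
      show "E x y" "E x z" "E y w" "E z b" "\<forall>s\<in>S. E x s"
        using z b path unfolding S_def nbhd_def by auto
    qed
  next
    case False
    \<comment> \<open>Every neighbour of x other than y sees only x, y, w; the degree bound forces m = 5.\<close>
    then have small: "nbhd N E z \<subseteq> {x, y, w}" if "z \<in> nbhd N E x - {y}" for z
      using that by blast
    have "2 \<le> card (nbhd N E x - {y})"
      using card_Diff_list[of "nbhd N E x" "[y]"] dx m by simp
    then obtain z1 z2 where z: "z1 \<in> nbhd N E x - {y}" "z2 \<in> nbhd N E x - {y}" "z1 \<noteq> z2"
      using two_elements by blast
    have dz2: "m - 2 \<le> card (nbhd N E z2)" using deg z(2) unfolding nbhd_def by auto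
    have "card (nbhd N E z2) \<le> card {x, y, w}" using small[OF z(2)] by (simp add: card_mono)
    also have "\<dots> \<le> 3" using card_length[of "[x, y, w]"] by simp
    finally have m5: "m = 5" using dz2 m by linarith
    have "E z2 w"
    proof (rule ccontr)
      assume "\<not> E z2 w"
      then have "nbhd N E z2 \<subseteq> {x, y}" using small[OF z(2)] unfolding nbhd_def by auto
      then have "card (nbhd N E z2) \<le> card {x, y}" by (simp add: card_mono)
      also have "\<dots> \<le> 2" using card_length[of "[x, y]"] by simp
      finally show False using dz2 m5 by linarith
    qed
    \<comment> \<open>For m = 5 the tree is a path z1 - x - z2 - w - y (T1) with the centre z2.\<close>
    show ?thesis
    proof (rule contains_T1[OF m simple_graph_sym[OF g], of z2 x w z1 y N "{}"])
      show "distinct [z2, x, w, z1, y]" "{z2, x, w, z1, y} \<subseteq> {..<N}"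
        using z \<open>E z2 w\<close> path irr unfolding nbhd_def by auto
      show "E z2 x" "E z2 w" "E x z1" "E w y"
        using z \<open>E z2 w\<close> path simple_graph_sym[OF g] unfolding nbhd_def by blast+
    qed (use m5 in auto)
  qed
qed

(* A cluster graph (disjoint union of cliques): adjacency is transitive on distinct vertices. *)
definition cluster_graph :: "nat \<Rightarrow> (nat \<Rightarrow> nat \<Rightarrow> bool) \<Rightarrow> bool" where
  "cluster_graph N E \<longleftrightarrow> (\<forall>x<N. \<forall>y<N. \<forall>w<N. E x y \<longrightarrow> E y w \<longrightarrow> x \<noteq> w \<longrightarrow> E x w)"

lemma cluster_graphD:
  "cluster_graph N E \<Longrightarrow> x < N \<Longrightarrow> y < N \<Longrightarrow> w < N \<Longrightarrow> E x y \<Longrightarrow> E y w \<Longrightarrow> x \<noteq> w \<Longrightarrow> E x w"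
  unfolding cluster_graph_def by blast

lemma cluster_graph_clique:
  assumes g: "simple_graph N E" and cl: "cluster_graph N E" and x: "x < N"
    and a: "a \<in> insert x (nbhd N E x)" and b: "b \<in> insert x (nbhd N E x)" and ab: "a \<noteq> b"
  shows "E a b"
proof -
  have sym: "E u v \<Longrightarrow> E v u" for u v using simple_graph_sym[OF g] by blast
  consider "a = x" "b \<in> nbhd N E x" | "b = x" "a \<in> nbhd N E x"
    | "a \<in> nbhd N E x" "b \<in> nbhd N E x" using a b ab by blast
  then show ?thesis
  proof cases
    case 1
    then show ?thesis unfolding nbhd_def by simp
  next
    case 2
    then show ?thesis using sym[of x a] unfolding nbhd_def by blast
  next
    case 3
    then have "E a x" "E x b" "a < N" "b < N" using sym[of x a] unfolding nbhd_def by blast+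
    then show ?thesis using cluster_graphD[OF cl _ x] ab by blast
  qed
qed

(* If all closed neighbourhoods of a cluster graph have d vertices, they partition the vertex set
   into classes of size d, so d divides the number of vertices. *)
lemma cluster_graph_dvd:
  assumes g: "simple_graph N E" and cl: "cluster_graph N E"
    and d: "\<forall>x<N. card (insert x (nbhd N E x)) = d"
  shows "d dvd N"
proof -
  \<comment> \<open>Equality or adjacency is an equivalence whose classes are the closed neighbourhoods.\<close>
  define r where "r = {(x, y). x < N \<and> y < N \<and> (x = y \<or> E x y)}"
  have "equiv {..<N} r"
  proof (rule equivI)
    show "r \<subseteq> {..<N} \<times> {..<N}" "refl_on {..<N} r" unfolding r_def refl_on_def by auto
    show "sym r" unfolding sym_def r_def using simple_graph_sym[OF g] by blast
    show "trans r"
    proof (rule transI)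
      fix x y z assume "(x, y) \<in> r" "(y, z) \<in> r"
      then show "(x, z) \<in> r" unfolding r_def using cluster_graphD[OF cl, of x y z] by auto
    qed
  qed
  moreover have "d dvd card X" if X: "X \<in> {..<N} // r" for X
  proof -
    obtain x where x: "x < N" "X = r `` {x}" using quotientE[OF X] by blast
    have "X = insert x (nbhd N E x)" using x unfolding r_def nbhd_def by auto
    then show ?thesis using d x(1) by simp
  qed
  ultimately have "d dvd card {..<N}" by (rule equiv_imp_dvd_card[OF finite_lessThan])
  then show ?thesis by simp
qed

lemma contains_of_clique:
  assumes K: "finite K" "K \<subseteq> {..<N}" "k \<le> card K"
    and clique: "\<forall>a\<in>K. \<forall>b\<in>K. a \<noteq> b \<longrightarrow> E a b" and irrefl: "\<forall>a. \<not> F a a"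
  shows "contains N E k F"
proof -
  have "\<exists>f. f ` {..<k} \<subseteq> K \<and> inj_on f {..<k}"
    using card_le_inj[OF finite_lessThan K(1)] K(3) by simp
  then obtain f where f: "f ` {..<k} \<subseteq> K" "inj_on f {..<k}" by blast
  have "E (f a) (f b)" if "a < k" "b < k" "F a b" for a b
  proof -
    have "a \<noteq> b" using irrefl that(3) by blast
    then have "f a \<noteq> f b" using inj_onD[OF f(2)] that(1,2) by blast
    moreover have "f a \<in> K" "f b \<in> K" using that(1,2) f(1) by auto
    ultimately show ?thesis using clique by blast
  qed
  then show ?thesis unfolding contains_def using f K(2) by blast
qed

lemma trees_of_min_degree:
  assumes g: "simple_graph N E" and m: "m \<ge> 5"
    and deg: "\<forall>v<N. m - 2 \<le> card (nbhd N E v)" and ndvd: "\<not> (m - 1) dvd N"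
  shows "contains N E m (T1 m) \<and> contains N E m (T2 m)"
proof (cases "cluster_graph N E")
  case False
  then obtain x y w where path: "{x, y, w} \<subseteq> {..<N}" "E x y" "E y w" "w \<noteq> x" "\<not> E x w"
    unfolding cluster_graph_def by blast
  show ?thesis using T1_of_induced_path[OF g m deg path] T2_of_induced_path[OF g m deg path] ..
next
  case cluster: True
  have card_closed: "card (insert x (nbhd N E x)) = card (nbhd N E x) + 1" for x
    using simple_graph_irrefl[OF g] by (simp add: nbhd_def)
  show ?thesis
  proof (cases "\<exists>x<N. m \<le> card (insert x (nbhd N E x))")
    case True
    then obtain x where x: "x < N" "m \<le> card (insert x (nbhd N E x))" by blast
    have K: "finite (insert x (nbhd N E x))" "insert x (nbhd N E x) \<subseteq> {..<N}"
      using x(1) nbhd_subset[of N E x] by auto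
    have clique: "\<forall>a\<in>insert x (nbhd N E x). \<forall>b\<in>insert x (nbhd N E x). a \<noteq> b \<longrightarrow> E a b"
      using cluster_graph_clique[OF g cluster x(1)] by blast
    have "\<forall>a. \<not> T1 m a a" "\<forall>a. \<not> T2 m a a" using m by (auto simp: T1_edge T2_edge)
    then show ?thesis using contains_of_clique[OF K x(2) clique] by blast
  next
    case False
    have "card (insert x (nbhd N E x)) = m - 1" if "x < N" for x
    proof -
      have "m - 2 \<le> card (nbhd N E x)" "\<not> m \<le> card (insert x (nbhd N E x))"
        using deg False that by auto
      then show ?thesis using card_closed[of x] m by linarith
    qed
    then show ?thesis using cluster_graph_dvd[OF g cluster] ndvd by blast
  qed
qed

lemma upper_bound:
  assumes g: "simple_graph N E" and m: "m \<ge> 5" and n: "n \<ge> 4"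
    and dvd: "(m - 1) dvd (n - 3)" and N: "N = m + n - 3"
  shows "(contains N E m (T1 m) \<and> contains N E m (T2 m)) \<or> contains N (compl_graph E) n (Tprime n)"
proof (cases "\<exists>v<N. n - 1 \<le> card (nbhd N (compl_graph E) v)")
  case True
  then obtain v where v: "v < N" "n - 1 \<le> card (nbhd N (compl_graph E) v)" by blast
  let ?C = "nbhd N (compl_graph E) v"
  show ?thesis
  proof (cases "\<exists>u\<in>?C. \<exists>w<N. compl_graph E u w \<and> w \<noteq> v")
    case True
    then obtain u w where "u \<in> ?C" "w < N" "compl_graph E u w" "w \<noteq> v" by blast
    then show ?thesis using Tprime_in_complement[OF g _ v] n by simp
  next
    case False
    have "3 \<le> card ?C" using v(2) n by linarith
    then obtain u1 u2 u3 where u: "u1 \<in> ?C" "u2 \<in> ?C" "u3 \<in> ?C" "distinct [u1, u2, u3]"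
      using three_elements by blast
    have distinct: "distinct [v, u1, u2, u3]" "{v, u1, u2, u3} \<subseteq> {..<N}"
      using u v(1) unfolding nbhd_def compl_graph_def by auto
    have dominating: "\<forall>u\<in>{u1, u2, u3}. \<forall>x<N. x \<notin> {u, v} \<longrightarrow> E u x"
    proof (intro ballI allI impI)
      fix u x assume ux: "u \<in> {u1, u2, u3}" "x < N" "x \<notin> {u, v}"
      then have "\<not> compl_graph E u x" using False u(1-3) by blast
      then show "E u x" using ux(3) unfolding compl_graph_def by auto
    qed
    have "m + 1 \<le> N" using N n by simp
    then show ?thesis using trees_of_dominating_triple[OF g m _ distinct dominating] by blast
  qed
next
  case False
  have "\<forall>v<N. m - 2 \<le> card (nbhd N E v)"
  proof (intro allI impI)
    fix v assume v: "v < N"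
    then have "\<not> n - 1 \<le> card (nbhd N (compl_graph E) v)" using False by blast
    then show "m - 2 \<le> card (nbhd N E v)" using degree_sum[OF g v] N m n by linarith
  qed
  moreover have "\<not> (m - 1) dvd N"
  proof
    assume "(m - 1) dvd N"
    moreover have "N = ((m - 1) + (n - 3)) + 1" using N m n by simp
    moreover have "(m - 1) dvd (m - 1) + (n - 3)" using dvd by simp
    ultimately have "(m - 1) dvd 1" by (metis dvd_add_right_iff)
    then show False using m by simp
  qed
  ultimately show ?thesis using trees_of_min_degree[OF g m] by blast
qed

(* The extremal graph: consecutive blocks of d vertices, each block a clique. *)
definition block_graph :: "nat \<Rightarrow> nat \<Rightarrow> nat \<Rightarrow> bool" where
  "block_graph d x y \<longleftrightarrow> x \<noteq> y \<and> x div d = y div d"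

lemma block_graph_simple: "simple_graph N (block_graph d)"
  unfolding simple_graph_def block_graph_def by auto

lemma block_eq:
  fixes d q :: nat assumes d: "0 < d"
  shows "{y. y div d = q} = {d * q..<d * q + d}"
proof (intro set_eqI iffI)
  fix y assume "y \<in> {y. y div d = q}"
  then show "y \<in> {d * q..<d * q + d}"
    using times_div_less_eq_dividend[of d y] dividend_less_times_div[OF d, of y] by auto
next
  fix y assume "y \<in> {d * q..<d * q + d}"
  then show "y \<in> {y. y div d = q}" by (auto intro: div_nat_eqI)
qed

lemma Tmi_radius_two:
  assumes m: "m \<ge> 5" and i: "i \<in> {1, 2}" and j: "j < m"
  shows "j = 0 \<or> Tmi i m 0 j \<or> (\<exists>p<m. Tmi i m 0 p \<and> Tmi i m p j)"
proof -
  define k where "k = m - 5"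
  have k: "m = k + 5" using m by (simp add: k_def)
  define p where "p = (if i = 1 then k + 1 else k + 2)"
  have star: "Tmi i m 0 j" if "1 \<le> j" "j \<le> k + 2" for j
    using that by (simp add: Tmi_def T1_edge T2_edge k)
  have p: "p < m" "Tmi i m 0 p" using star unfolding p_def k by auto
  from j k consider "j = 0" | "1 \<le> j" "j \<le> k + 2" | "j = k + 3" | "j = k + 4"
    by linarith
  then show ?thesis
  proof cases
    case 2
    then show ?thesis using star by blast
  next
    case 3
    have "Tmi i m p (k + 3)" using i by (auto simp: p_def Tmi_def T1_edge T2_edge k)
    then show ?thesis using p 3 by blast
  next
    case 4
    have "Tmi i m (k + 2) (k + 4)" using i by (auto simp: Tmi_def T1_edge T2_edge k)
    moreover have "k + 2 < m" "Tmi i m 0 (k + 2)" using star k by auto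
    ultimately show ?thesis using 4 by blast
  qed simp
qed

(* The block graph with blocks of size m - 1 contains no T_m^i: the tree is connected, so its m
   vertices would have to lie in a single block. *)
lemma no_Tmi_in_block_graph:
  assumes m: "m \<ge> 5" and i: "i \<in> {1, 2}"
  shows "\<not> contains N (block_graph (m - 1)) m (Tmi i m)"
proof
  let ?d = "m - 1"
  assume "contains N (block_graph ?d) m (Tmi i m)"
  then obtain f where f: "inj_on f {..<m}"
    and edges: "\<forall>a<m. \<forall>b<m. Tmi i m a b \<longrightarrow> block_graph ?d (f a) (f b)"
    unfolding contains_def by blast
  have same_block: "f a div ?d = f b div ?d" if "a < m" "b < m" "Tmi i m a b" for a b
    using edges that unfolding block_graph_def by blast
  have "f j div ?d = f 0 div ?d" if j: "j < m" for j
  proof -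
    from Tmi_radius_two[OF m i j] consider "j = 0" | "Tmi i m 0 j"
      | p where "p < m" "Tmi i m 0 p" "Tmi i m p j" by blast
    then show ?thesis
    proof cases
      case 2
      then show ?thesis using same_block[of 0 j] j by simp
    next
      case (3 p)
      then show ?thesis using same_block[of 0 p] same_block[of p j] j by simp
    qed simp
  qed
  then have "f ` {..<m} \<subseteq> {y. y div ?d = f 0 div ?d}" by auto
  then have "card (f ` {..<m}) \<le> card {y. y div ?d = f 0 div ?d}"
    using m by (intro card_mono) (simp_all add: block_eq)
  also have "\<dots> = ?d" using m by (simp add: block_eq)
  finally show False using card_image[OF f] m by simp
qed

(* On at most m + n - 4 vertices, the complement of the block graph contains no T_n': the n - 2
   leaves of the centre must avoid its block, leaving only n - 3 vertices. *)
lemma no_Tprime_in_block_complement: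
  assumes m: "m \<ge> 5" and n: "n \<ge> 4" and dvd: "(m - 1) dvd (n - 3)" and N: "N \<le> m + n - 4"
  shows "\<not> contains N (compl_graph (block_graph (m - 1))) n (Tprime n)"
proof
  let ?d = "m - 1"
  assume "contains N (compl_graph (block_graph ?d)) n (Tprime n)"
  then obtain f where f: "inj_on f {..<n}" "f ` {..<n} \<subseteq> {..<N}"
    and edges: "\<forall>a<n. \<forall>b<n. Tprime n a b \<longrightarrow> compl_graph (block_graph ?d) (f a) (f b)"
    unfolding contains_def by blast
  obtain k where k: "n - 3 = ?d * k" using dvd by blast
  \<comment> \<open>The N vertices lie in k + 1 blocks; the n - 2 leaves avoid the block B of the centre.\<close>
  define N' where "N' = ?d * (k + 1)"
  define B where "B = {y. y div ?d = f 0 div ?d}"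
  have N': "N' = m + n - 4" unfolding N'_def using k m n by (simp add: algebra_simps)
  have "f 0 < N" using f(2) n by (simp add: image_subset_iff)
  then have "f 0 < N'" using N N' by linarith
  then have "f 0 div ?d < k + 1" unfolding N'_def by (simp add: less_mult_imp_div_less mult.commute)
  then have "?d * (f 0 div ?d + 1) \<le> N'" unfolding N'_def by (intro mult_le_mono2) simp
  moreover have "B = {?d * (f 0 div ?d)..<?d * (f 0 div ?d) + ?d}"
    unfolding B_def using m by (simp add: block_eq)
  ultimately have B: "B \<subseteq> {..<N'}" "card B = ?d" by (auto simp: algebra_simps)
  have leaves: "f ` {1..n-2} \<subseteq> {..<N'} - B"
  proof
    fix y assume "y \<in> f ` {1..n-2}"
    then obtain j where j: "1 \<le> j" "j \<le> n - 2" "y = f j" by auto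
    have "Tprime n 0 j" "0 < n" "j < n" using j n by (simp_all add: Tprime_edge)
    then have "compl_graph (block_graph ?d) (f 0) (f j)" using edges by blast
    then have "y \<notin> B" using j(3) unfolding B_def compl_graph_def block_graph_def by auto
    moreover have "y < N" using f(2) \<open>j < n\<close> j(3) by auto
    then have "y < N'" using N N' by linarith
    ultimately show "y \<in> {..<N'} - B" by auto
  qed
  have "inj_on f {1..n-2}" using f(1) by (rule inj_on_subset) (use n in auto)
  then have "n - 2 = card (f ` {1..n-2})" by (simp add: card_image)
  also have "\<dots> \<le> card ({..<N'} - B)" using leaves by (simp add: card_mono)
  also have "\<dots> = N' - ?d" using B by (simp add: card_Diff_subset finite_subset)
  finally show False using N' m n by linarith
qed

theorem theorem5p2:
  fixes m n i :: nat
  assumes "m \<ge> 5" and "n \<ge> 4" and "(m - 1) dvd (n - 3)" and "i \<in> {1, 2}"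
  shows "ramsey_number m (Tmi i m) n (Tprime n) = m + n - 3"
  unfolding ramsey_number_def
proof (rule Least_equality)
  have "ramsey_prop m (Tmi i m) n (Tprime n) (m + n - 3)"
    unfolding ramsey_prop_def
  proof (intro allI impI)
    fix E assume "simple_graph (m + n - 3) E"
    from upper_bound[OF this assms(1-3) refl]
    show "contains (m + n - 3) E m (Tmi i m) \<or> contains (m + n - 3) (compl_graph E) n (Tprime n)"
      unfolding Tmi_def by auto
  qed
  then show "0 < m + n - 3 \<and> ramsey_prop m (Tmi i m) n (Tprime n) (m + n - 3)"
    using assms(1) by simp
next
  fix N assume N: "0 < N \<and> ramsey_prop m (Tmi i m) n (Tprime n) N"
  show "m + n - 3 \<le> N"
  proof (rule ccontr)
    assume "\<not> m + n - 3 \<le> N"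
    then have small: "N \<le> m + n - 4" by simp
    have "contains N (block_graph (m - 1)) m (Tmi i m) \<or>
        contains N (compl_graph (block_graph (m - 1))) n (Tprime n)"
      using N block_graph_simple unfolding ramsey_prop_def by blast
    then show False
      using no_Tmi_in_block_graph[OF assms(1,4)] no_Tprime_in_block_complement[OF assms(1-3) small]
      by blast
  qed
qed

end
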